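(* Let $n,t$ be positive integers, $\sigma\in(0,1]$ with $\sigma n$ an integer, and $\alpha>0$ such that $k=\alpha/\sigma$ is a positive integer. For each $j\in[t]$ let $S_j$ be a map assigning to each $(x_1,\dots,x_{j-1})\in[n]^{j-1}$ a subset $S_j(x_1,\dots,x_{j-1})\subseteq[n]$ of size $\sigma n$; the associated adaptive sequence $\mathfrak{D}$ draws $X_j$ uniformly from $S_j(X_1,\dots,X_{j-1})$ for $j=1,\dots,t$. Construct $(X_1,Z_1^{(1)},\dots,Z_k^{(1)},\dots,X_t,Z_1^{(t)},\dots,Z_k^{(t)})$ as follows: for $j=1,\dots,t$, draw $Y_1^{(j)},\dots,Y_k^{(j)}$ independently and uniformly from $[n]$; for each $i$ with $Y_i^{(j)}\notin S_j(X_1,\dots,X_{j-1})$ set $Z_i^{(j)}=Y_i^{(j)}$; for each $i$ with $Y_i^{(j)}\in S_j(X_1,\dots,X_{j-1})$ draw $\tilde W_i^{(j)}$ uniformly and independently from $S_j(X_1,\dots,X_{j-1})$ and set $Z_i^{(j)}=\tilde W_i^{(j)}$; if some $Y_i^{(j)}\in S_j(X_1,\dots,X_{j-1})$, let $X_j$ be chosen uniformly at random among the drawn $\tilde W_i^{(j)}$, and otherwise draw $X_j$ uniformly from $S_j(X_1,\dots,X_{j-1})$ independently. Then: (a) $X_1,\dots,X_t$ is distributed according to $\mathfrak{D}$; (b) each $Z_i^{(j)}$ is uniformly distributed on $[n]$; (c) the $Z_i^{(j)}$ ($i\in[k]$, $j\in[t]$) are all mutually independent; (d) with probability at least $1-t(1-\sigma)^{\alpha/\sigma}$,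 $\{X_1,\dots,X_t\}\subseteq\{Z_i^{(j)} : i\in[k],\ j\in[t]\}$. *)

theory Defs
  imports "HOL-Probability.Probability"
begin

text \<open>[n] is rendered as {1..n}.  A schedule S assigns to step j and history
  xs = [x_1,...,x_{j-1}] the set S j xs.\<close>

fun seq_pmf :: "'a pmf list \<Rightarrow> 'a list pmf" where
  "seq_pmf [] = return_pmf []"
| "seq_pmf (p # ps) = do { x \<leftarrow> p; xs \<leftarrow> seq_pmf ps; return_pmf (x # xs) }"

fun adaptive :: "(nat \<Rightarrow> nat list \<Rightarrow> nat set) \<Rightarrow> nat \<Rightarrow> nat list pmf" where
  "adaptive S 0 = return_pmf []"
| "adaptive S (Suc j) = do { xs \<leftarrow> adaptive S j; x \<leftarrow> pmf_of_set (S (Suc j) xs); return_pmf (xs @ [x]) }"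

definition coupling_step :: "(nat \<Rightarrow> nat list \<Rightarrow> nat set) \<Rightarrow> nat \<Rightarrow> nat \<Rightarrow> nat \<Rightarrow> nat list
    \<Rightarrow> (nat \<times> nat list) pmf" where
  "coupling_step S n k j xs = do {
     Ys \<leftarrow> seq_pmf (replicate k (pmf_of_set {1..n}));
     Ws \<leftarrow> seq_pmf (map (\<lambda>y. if y \<in> S j xs then map_pmf Some (pmf_of_set (S j xs))
                                 else return_pmf None) Ys);
     let Zs = map2 (\<lambda>y w. case w of Some w' \<Rightarrow> w' | None \<Rightarrow> y) Ys Ws;
     let I = {i. i < k \<and> Ys ! i \<in> S j xs};
     X \<leftarrow> (if I \<noteq> {} then map_pmf (\<lambda>i. the (Ws ! i)) (pmf_of_set I)
           else pmf_of_set (S j xs));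
     return_pmf (X, Zs) }"

fun coupling :: "(nat \<Rightarrow> nat list \<Rightarrow> nat set) \<Rightarrow> nat \<Rightarrow> nat \<Rightarrow> nat \<Rightarrow> (nat \<times> nat list) list pmf" where
  "coupling S n k 0 = return_pmf []"
| "coupling S n k (Suc j) = do { h \<leftarrow> coupling S n k j;
      r \<leftarrow> coupling_step S n k (Suc j) (map fst h); return_pmf (h @ [r]) }"

end

theory Submission
  imports Defs
begin

text \<open>A uniform point of [n] that lands in S_j and is then redrawn uniformly from S_j is still
  uniform on [n], so every Z_i^(j) is uniform and independent of everything drawn before, whatever
  the history X_1, ..., X_{j-1}. X_j is one of the redraws, chosen by an index that depends only on
  the Y's, so it is uniform on S_j and the X's follow the adaptive sequence. X_j can be missing
  from the Z's only if none of the k points Y_i^(j) hits S_j, which has probability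
  (1 - \<sigma>)^k = (1 - \<sigma>)^(\<alpha>/\<sigma>); a union bound over the t rounds gives (d).\<close>

lemma set_pmf_seq_pmf:
  assumes "xs \<in> set_pmf (seq_pmf ps)"
  shows "length xs = length ps \<and> (\<forall>i<length ps. xs ! i \<in> set_pmf (ps ! i))"
  using assms
proof (induction ps arbitrary: xs)
  case (Cons p ps)
  then obtain y ys where "xs = y # ys" "y \<in> set_pmf p" "ys \<in> set_pmf (seq_pmf ps)" by auto
  with Cons.IH[of ys] show ?case by (auto simp: nth_Cons split: nat.splits)
qed simp

lemma map_pmf_nth_seq_pmf:
  "i < length ps \<Longrightarrow> map_pmf (\<lambda>xs. xs ! i) (seq_pmf ps) = ps ! i"
proof (induction ps arbitrary: i)
  case (Cons p ps)
  then show ?case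
    by (cases i) (simp_all add: map_bind_pmf bind_return_pmf' map_pmf_def [symmetric] pmf.map_comp o_def)
qed simp

lemma seq_pmf_snoc:
  "seq_pmf (ps @ [p]) = bind_pmf (seq_pmf ps) (\<lambda>xs. map_pmf (\<lambda>x. xs @ [x]) p)"
  by (induction ps) (simp_all add: bind_assoc_pmf bind_return_pmf bind_return_pmf' map_pmf_def)

lemma seq_pmf_bind_map2:
  "bind_pmf (seq_pmf ps) (\<lambda>ys. map_pmf (map2 g ys) (seq_pmf (map f ys))) =
   seq_pmf (map (\<lambda>p. bind_pmf p (\<lambda>y. map_pmf (g y) (f y))) ps)"
proof (induction ps)
  case (Cons p ps)
  have "bind_pmf (seq_pmf (p # ps)) (\<lambda>ys. map_pmf (map2 g ys) (seq_pmf (map f ys))) =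
    bind_pmf p (\<lambda>y. bind_pmf (seq_pmf ps) (\<lambda>ys. bind_pmf (f y) (\<lambda>w.
      map_pmf (\<lambda>ws. g y w # map2 g ys ws) (seq_pmf (map f ys)))))"
    by (simp add: bind_assoc_pmf bind_return_pmf map_bind_pmf map_pmf_def)
  also have "\<dots> = bind_pmf p (\<lambda>y. bind_pmf (f y) (\<lambda>w. bind_pmf (seq_pmf ps) (\<lambda>ys.
      map_pmf (\<lambda>ws. g y w # map2 g ys ws) (seq_pmf (map f ys)))))"
    by (subst bind_commute_pmf) (rule refl)
  also have "\<dots> = seq_pmf (map (\<lambda>p. bind_pmf p (\<lambda>y. map_pmf (g y) (f y))) (p # ps))"
  proof -
    have "seq_pmf (map (\<lambda>p. bind_pmf p (\<lambda>y. map_pmf (g y) (f y))) ps) =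
        bind_pmf (seq_pmf ps) (\<lambda>ys. map_pmf (map2 g ys) (seq_pmf (map f ys)))"
      by (rule Cons.IH [symmetric])
    then show ?thesis
      by (simp add: map_pmf_def bind_assoc_pmf bind_return_pmf)
  qed
  finally show ?case .
qed (simp add: bind_return_pmf)

lemma emeasure_seq_pmf_replicate_subset:
  "emeasure (measure_pmf (seq_pmf (replicate m p))) {ys. set ys \<subseteq> B} = emeasure (measure_pmf p) B ^ m"
proof (induction m)
  case (Suc m)
  have "emeasure (measure_pmf (seq_pmf (replicate (Suc m) p))) {ys. set ys \<subseteq> B} =
      (\<integral>\<^sup>+ y. emeasure (measure_pmf (seq_pmf (replicate m p))) {ys. set ys \<subseteq> B} * indicator B y \<partial>p)"
    by (simp add: map_pmf_def [symmetric]) (intro nn_integral_cong, auto simp: indicator_def)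
  also have "\<dots> = emeasure (measure_pmf p) B ^ Suc m"
    by (simp add: nn_integral_multc Suc.IH mult.commute)
  finally show ?case .
qed simp

lemma emeasure_pmf_of_set_Compl:
  assumes "finite A" "A \<noteq> {}" "T \<subseteq> A"
  shows "emeasure (measure_pmf (pmf_of_set A)) (- T) = ennreal (1 - card T / card A)"
proof -
  have "card (A \<inter> - T) = card A - card T"
    using assms by (simp add: Diff_eq [symmetric] card_Diff_subset finite_subset)
  moreover have "card T \<le> card A" using assms by (simp add: card_mono)
  ultimately show ?thesis
    using assms by (simp add: measure_pmf.emeasure_eq_measure measure_pmf_of_set diff_divide_distrib)
qed

definition row_entries :: "'a \<Rightarrow> nat \<Rightarrow> nat \<Rightarrow> 'a list \<Rightarrow> nat \<times> nat \<Rightarrow> 'a" where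
  "row_entries d j k zs = (\<lambda>(a, i). if (a, i) \<in> {j} \<times> {1..k} then zs ! (i - 1) else d)"

definition matrix_entries :: "'a \<Rightarrow> nat \<Rightarrow> nat \<Rightarrow> 'a list list \<Rightarrow> nat \<times> nat \<Rightarrow> 'a" where
  "matrix_entries d t k zss = (\<lambda>(j, i). if (j, i) \<in> {1..t} \<times> {1..k} then zss ! (j - 1) ! (i - 1) else d)"

lemma row_entries_seq_pmf:
  "map_pmf (row_entries d j k) (seq_pmf (replicate k p)) = Pi_pmf ({j} \<times> {1..k}) d (\<lambda>_. p)"
proof (induction k)
  case 0
  then show ?case by (simp add: row_entries_def)
next
  case (Suc k)
  have "replicate (Suc k) p = replicate k p @ [p]" by (simp add: replicate_append_same)
  then have "map_pmf (row_entries d j (Suc k)) (seq_pmf (replicate (Suc k) p)) =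
      bind_pmf (seq_pmf (replicate k p)) (\<lambda>zs. map_pmf (\<lambda>z. row_entries d j (Suc k) (zs @ [z])) p)"
    by (simp add: seq_pmf_snoc map_bind_pmf pmf.map_comp o_def)
  also have "\<dots> = bind_pmf (seq_pmf (replicate k p))
      (\<lambda>zs. map_pmf (\<lambda>z. (row_entries d j k zs)((j, Suc k) := z)) p)"
    by (intro bind_pmf_cong map_pmf_cong refl)
       (auto dest!: set_pmf_seq_pmf simp: row_entries_def fun_eq_iff nth_append)
  also have "\<dots> = bind_pmf (Pi_pmf ({j} \<times> {1..k}) d (\<lambda>_. p))
      (\<lambda>f. map_pmf (\<lambda>z. f((j, Suc k) := z)) p)"
    by (simp only: Suc.IH [symmetric] bind_map_pmf)
  also have "\<dots> = bind_pmf p (\<lambda>z. bind_pmf (Pi_pmf ({j} \<times> {1..k}) d (\<lambda>_. p))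
      (\<lambda>f. return_pmf (f((j, Suc k) := z))))"
    unfolding map_pmf_def by (rule bind_commute_pmf)
  also have "\<dots> = Pi_pmf ({j} \<times> {1..Suc k}) d (\<lambda>_. p)"
    by (subst Pi_pmf_insert' [symmetric]) (auto intro: arg_cong [where f = "\<lambda>A. Pi_pmf A d _"])
  finally show ?case .
qed

lemma matrix_entries_seq_pmf:
  "map_pmf (matrix_entries d t k) (seq_pmf (replicate t (seq_pmf (replicate k p)))) =
   Pi_pmf ({1..t} \<times> {1..k}) d (\<lambda>_. p)"
proof (induction t)
  case 0
  then show ?case by (simp add: matrix_entries_def)
next
  case (Suc t)
  let ?R = "seq_pmf (replicate k p)" and ?A = "{1..t} \<times> {1..k}" and ?B = "{Suc t} \<times> {1..k}"
  have "replicate (Suc t) ?R = replicate t ?R @ [?R]" by (simp add: replicate_append_same)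
  then have "map_pmf (matrix_entries d (Suc t) k) (seq_pmf (replicate (Suc t) ?R)) =
      bind_pmf (seq_pmf (replicate t ?R)) (\<lambda>zss. map_pmf (\<lambda>zs. matrix_entries d (Suc t) k (zss @ [zs])) ?R)"
    by (simp add: seq_pmf_snoc map_bind_pmf pmf.map_comp o_def)
  also have "\<dots> = bind_pmf (seq_pmf (replicate t ?R)) (\<lambda>zss. map_pmf (\<lambda>zs x.
      if x \<in> ?A then matrix_entries d t k zss x else row_entries d (Suc t) k zs x) ?R)"
    by (intro bind_pmf_cong map_pmf_cong refl)
       (auto dest!: set_pmf_seq_pmf simp: matrix_entries_def row_entries_def fun_eq_iff nth_append)
  also have "\<dots> = map_pmf (\<lambda>(f, g) x. if x \<in> ?A then f x else g x)
      (pair_pmf (map_pmf (matrix_entries d t k) (seq_pmf (replicate t ?R)))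
                (map_pmf (row_entries d (Suc t) k) ?R))"
    by (simp add: pair_pmf_def map_bind_pmf bind_map_pmf map_pmf_def [symmetric] pmf.map_comp o_def)
  also have "\<dots> = Pi_pmf (?A \<union> ?B) d (\<lambda>_. p)"
    by (simp only: Suc.IH row_entries_seq_pmf) (rule Pi_pmf_union [symmetric], auto)
  also have "?A \<union> ?B = {1..Suc t} \<times> {1..k}" by auto
  finally show ?case .
qed

lemma indep_vars_map_pmf:
  assumes "prob_space.indep_vars (measure_pmf (map_pmf F p)) (\<lambda>_. count_space UNIV) X I"
  shows "prob_space.indep_vars (measure_pmf p) (\<lambda>_. count_space UNIV) (\<lambda>i x. X i (F x)) I"
proof (cases "I = {}")
  case True
  then show ?thesis
    by (simp add: prob_space.indep_vars_def [OF measure_pmf.prob_space_axioms]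
        prob_space.indep_sets_def [OF measure_pmf.prob_space_axioms])
next
  case False
  let ?C = "count_space UNIV"
  have "distr (measure_pmf p) (Pi\<^sub>M I (\<lambda>_. ?C)) (\<lambda>x. \<lambda>i\<in>I. X i (F x)) =
      distr (distr (measure_pmf p) ?C F) (Pi\<^sub>M I (\<lambda>_. ?C)) (\<lambda>y. \<lambda>i\<in>I. X i y)"
    by (subst distr_distr) (auto simp: o_def space_PiM PiE_iff)
  also have "\<dots> = Pi\<^sub>M I (\<lambda>i. distr (distr (measure_pmf p) ?C F) ?C (X i))"
    using assms False
    by (subst (asm) prob_space.indep_vars_iff_distr_eq_PiM' [OF measure_pmf.prob_space_axioms])
       (auto simp: map_pmf_rep_eq)
  also have "\<dots> = Pi\<^sub>M I (\<lambda>i. distr (measure_pmf p) ?C (\<lambda>x. X i (F x)))"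
    by (intro PiM_cong refl) (simp add: distr_distr o_def)
  finally show ?thesis
    using False by (subst prob_space.indep_vars_iff_distr_eq_PiM' [OF measure_pmf.prob_space_axioms]) auto
qed

text \<open>In round j with T = S_j(X_1, ..., X_{j-1}): resample T (Y_i) is the law of the redraw
  W_i (None if Y_i misses T), redrawn Y_i W_i is Z_i, and coupled_X_pmf gives the law of X_j.\<close>
definition resample :: "'a set \<Rightarrow> 'a \<Rightarrow> 'a option pmf" where
  "resample T y = (if y \<in> T then map_pmf Some (pmf_of_set T) else return_pmf None)"

definition redrawn :: "'a \<Rightarrow> 'a option \<Rightarrow> 'a" where
  "redrawn y w = (case w of Some w' \<Rightarrow> w' | None \<Rightarrow> y)"

definition coupled_X_pmf :: "'a set \<Rightarrow> nat \<Rightarrow> 'a list \<Rightarrow> 'a option list \<Rightarrow> 'a pmf" where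
  "coupled_X_pmf T k ys ws =
     (if {i. i < k \<and> ys ! i \<in> T} \<noteq> {}
      then map_pmf (\<lambda>i. the (ws ! i)) (pmf_of_set {i. i < k \<and> ys ! i \<in> T})
      else pmf_of_set T)"

lemma coupling_step_eq:
  "coupling_step S n k j xs = do {
     ys \<leftarrow> seq_pmf (replicate k (pmf_of_set {1..n}));
     ws \<leftarrow> seq_pmf (map (resample (S j xs)) ys);
     x \<leftarrow> coupled_X_pmf (S j xs) k ys ws;
     return_pmf (x, map2 redrawn ys ws) }"
  unfolding coupling_step_def Let_def resample_def redrawn_def coupled_X_pmf_def by simp

lemma bind_pmf_of_set_redraw:
  assumes "finite A" "T \<subseteq> A" "T \<noteq> {}"
  shows "bind_pmf (pmf_of_set A) (\<lambda>y. if y \<in> T then pmf_of_set T else return_pmf y) = pmf_of_set A"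
proof (rule pmf_eqI)
  fix z
  have fin: "finite T" "A \<noteq> {}" using assms finite_subset by auto
  have "(\<Sum>y\<in>A. pmf (if y \<in> T then pmf_of_set T else return_pmf y) z) =
      (\<Sum>y\<in>A. if y \<in> T then pmf (pmf_of_set T) z else indicator {y} z)"
    by (intro sum.cong) (auto simp: pmf_return indicator_def)
  also have "\<dots> = (\<Sum>y\<in>T. pmf (pmf_of_set T) z) + (\<Sum>y\<in>A - T. indicator {y} z)"
    using assms by (simp add: sum.If_cases Int_absorb1 Diff_eq)
  also have "\<dots> = indicator A z"
    using assms fin by (auto simp: indicator_def card_gt_0_iff)
  finally show "pmf (bind_pmf (pmf_of_set A) (\<lambda>y. if y \<in> T then pmf_of_set T else return_pmf y)) z =
      pmf (pmf_of_set A) z"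
    using assms fin by (simp add: pmf_bind_pmf_of_set)
qed

text \<open>The index of the chosen redraw depends only on ys, and every redraw at a hit index is
  uniform on T.\<close>
lemma bind_coupled_X_pmf:
  assumes "finite T" "T \<noteq> {}" "length ys = k"
  shows "bind_pmf (seq_pmf (map (resample T) ys)) (coupled_X_pmf T k ys) = pmf_of_set T"
proof (cases "{i. i < k \<and> ys ! i \<in> T} = {}")
  case True
  then show ?thesis unfolding coupled_X_pmf_def by simp
next
  case False
  define I where "I = {i. i < k \<and> ys ! i \<in> T}"
  have I: "finite I" "I \<noteq> {}" using False by (auto simp: I_def)
  have "bind_pmf (seq_pmf (map (resample T) ys)) (coupled_X_pmf T k ys) =
      bind_pmf (pmf_of_set I) (\<lambda>i. map_pmf the (map_pmf (\<lambda>ws. ws ! i) (seq_pmf (map (resample T) ys))))"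
    unfolding coupled_X_pmf_def I_def [symmetric] using I(2)
    by (simp add: map_pmf_def bind_assoc_pmf bind_return_pmf bind_commute_pmf [of "pmf_of_set I"])
  also have "\<dots> = bind_pmf (pmf_of_set I) (\<lambda>i. pmf_of_set T)"
    using I assms(3)
    by (intro bind_pmf_cong refl)
       (simp add: map_pmf_nth_seq_pmf I_def resample_def pmf.map_comp o_def)
  finally show ?thesis by simp
qed

lemma coupled_X_mem_redrawn:
  assumes "length ys = k" "\<not> set ys \<subseteq> - T"
    and "ws \<in> set_pmf (seq_pmf (map (resample T) ys))" "x \<in> set_pmf (coupled_X_pmf T k ys ws)"
  shows "x \<in> set (map2 redrawn ys ws)"
proof -
  define I where "I = {i. i < k \<and> ys ! i \<in> T}"
  have I: "finite I" "I \<noteq> {}" using assms(1,2) by (auto simp: I_def in_set_conv_nth)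
  then obtain i where i: "i \<in> I" and x: "x = the (ws ! i)"
    using assms(4) unfolding coupled_X_pmf_def I_def [symmetric] by auto
  have ws: "length ws = k" "ws ! i \<in> set_pmf (resample T (ys ! i))"
    using set_pmf_seq_pmf [OF assms(3)] i assms(1) by (auto simp: I_def)
  then have "map2 redrawn ys ws ! i = x"
    using i x assms(1) by (auto simp: I_def resample_def redrawn_def)
  moreover have "i < length (map2 redrawn ys ws)" using i ws(1) assms(1) by (simp add: I_def)
  ultimately show ?thesis by (metis nth_mem)
qed

lemma coupling_step_fst:
  assumes "finite (S j xs)" "S j xs \<noteq> {}"
  shows "map_pmf fst (coupling_step S n k j xs) = pmf_of_set (S j xs)"
proof -
  have "map_pmf fst (coupling_step S n k j xs) =
      bind_pmf (seq_pmf (replicate k (pmf_of_set {1..n})))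
        (\<lambda>ys. bind_pmf (seq_pmf (map (resample (S j xs)) ys)) (coupled_X_pmf (S j xs) k ys))"
    unfolding coupling_step_eq by (simp add: map_bind_pmf bind_return_pmf')
  also have "\<dots> = pmf_of_set (S j xs)"
    using assms by (subst bind_pmf_cong [OF refl bind_coupled_X_pmf]) (auto dest!: set_pmf_seq_pmf)
  finally show ?thesis .
qed

lemma coupling_step_snd:
  assumes "S j xs \<subseteq> {1..n}" "S j xs \<noteq> {}"
  shows "map_pmf snd (coupling_step S n k j xs) = seq_pmf (replicate k (pmf_of_set {1..n}))"
proof -
  have "map_pmf snd (coupling_step S n k j xs) =
      bind_pmf (seq_pmf (replicate k (pmf_of_set {1..n})))
        (\<lambda>ys. map_pmf (map2 redrawn ys) (seq_pmf (map (resample (S j xs)) ys)))"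
    unfolding coupling_step_eq
    by (simp add: map_bind_pmf bind_return_pmf' map_pmf_def [symmetric] pmf.map_comp o_def)
  also have "\<dots> = seq_pmf (replicate k (bind_pmf (pmf_of_set {1..n})
      (\<lambda>y. if y \<in> S j xs then pmf_of_set (S j xs) else return_pmf y)))"
    by (simp add: seq_pmf_bind_map2 resample_def redrawn_def pmf.map_comp o_def if_distrib
        cong: if_cong)
  also have "\<dots> = seq_pmf (replicate k (pmf_of_set {1..n}))"
    using assms by (simp add: bind_pmf_of_set_redraw)
  finally show ?thesis .
qed

lemma emeasure_coupling_step_miss_le:
  "emeasure (measure_pmf (coupling_step S n k j xs)) {r. fst r \<notin> set (snd r)} \<le>
   emeasure (measure_pmf (seq_pmf (replicate k (pmf_of_set {1..n})))) {ys. set ys \<subseteq> - S j xs}"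
proof -
  let ?Y = "seq_pmf (replicate k (pmf_of_set {1..n}))" and ?E = "{ys. set ys \<subseteq> - S j xs}"
  let ?K = "\<lambda>ys. do {
     ws \<leftarrow> seq_pmf (map (resample (S j xs)) ys);
     x \<leftarrow> coupled_X_pmf (S j xs) k ys ws;
     return_pmf (x, map2 redrawn ys ws) }"
  have "emeasure (measure_pmf (coupling_step S n k j xs)) {r. fst r \<notin> set (snd r)} =
      (\<integral>\<^sup>+ ys. emeasure (measure_pmf (?K ys)) {r. fst r \<notin> set (snd r)} \<partial>?Y)"
    unfolding coupling_step_eq by simp
  also have "\<dots> \<le> (\<integral>\<^sup>+ ys. indicator ?E ys \<partial>?Y)"
  proof (intro nn_integral_mono_AE AE_pmfI)
    fix ys assume ys: "ys \<in> set_pmf ?Y"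
    show "emeasure (measure_pmf (?K ys)) {r. fst r \<notin> set (snd r)} \<le> indicator ?E ys"
    proof (cases "ys \<in> ?E")
      case False
      have "set_pmf (?K ys) \<inter> {r. fst r \<notin> set (snd r)} = {}"
        using False coupled_X_mem_redrawn [of ys k "S j xs"] set_pmf_seq_pmf [OF ys] by auto
      then have "measure_pmf.prob (?K ys) {r. fst r \<notin> set (snd r)} = 0"
        by (simp only: measure_pmf_zero_iff)
      then show ?thesis by (simp add: measure_pmf.emeasure_eq_measure)
    qed (simp del: emeasure_bind_pmf add: measure_pmf.emeasure_le_1)
  qed
  finally show ?thesis by simp
qed

lemma emeasure_coupling_step_miss:
  assumes "n > 0" "S j xs \<subseteq> {1..n}"
  shows "emeasure (measure_pmf (coupling_step S n k j xs)) {r. fst r \<notin> set (snd r)} \<le>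
    ennreal ((1 - card (S j xs) / n) ^ k)"
proof -
  have "card (S j xs) \<le> n" using assms card_mono [of "{1..n}"] by fastforce
  then have "0 \<le> 1 - card (S j xs) / n" using assms(1) by (simp add: field_simps)
  then show ?thesis
    using emeasure_coupling_step_miss_le [of S n k j xs] assms
    by (simp add: Compl_eq_Diff_UNIV [symmetric] emeasure_seq_pmf_replicate_subset
        emeasure_pmf_of_set_Compl ennreal_power)
qed

definition schedule_on :: "(nat \<Rightarrow> nat list \<Rightarrow> nat set) \<Rightarrow> nat \<Rightarrow> nat \<Rightarrow> bool" where
  "schedule_on S n t \<longleftrightarrow> (\<forall>j xs. j < t \<longrightarrow> length xs = j \<longrightarrow> set xs \<subseteq> {1..n} \<longrightarrow>
     S (Suc j) xs \<subseteq> {1..n} \<and> S (Suc j) xs \<noteq> {})"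

lemma coupling_Suc_map_pmf:
  "coupling S n k (Suc j) =
     bind_pmf (coupling S n k j) (\<lambda>h. map_pmf (\<lambda>r. h @ [r]) (coupling_step S n k (Suc j) (map fst h)))"
  by (simp add: map_pmf_def)

lemma set_pmf_coupling:
  assumes "schedule_on S n t" "j \<le> t" "h \<in> set_pmf (coupling S n k j)"
  shows "length h = j \<and> set (map fst h) \<subseteq> {1..n}"
  using assms(2,3)
proof (induction j arbitrary: h)
  case (Suc j)
  from Suc.prems(2) obtain h' r where h: "h = h' @ [r]" "h' \<in> set_pmf (coupling S n k j)"
    and r: "r \<in> set_pmf (coupling_step S n k (Suc j) (map fst h'))"
    by auto
  have T: "S (Suc j) (map fst h') \<subseteq> {1..n}" "S (Suc j) (map fst h') \<noteq> {}"
    using assms(1) Suc h by (auto simp: schedule_on_def)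
  then have "fst r \<in> S (Suc j) (map fst h')"
    using r coupling_step_fst [of S "Suc j" "map fst h'" n k] finite_subset
    by (metis finite_atLeastAtMost set_map_pmf imageI set_pmf_of_set)
  with Suc T h show ?case by auto
qed simp

lemma coupling_next_round:
  assumes "schedule_on S n t" "j < t" "h \<in> set_pmf (coupling S n k j)"
  shows "S (Suc j) (map fst h) \<subseteq> {1..n}" "S (Suc j) (map fst h) \<noteq> {}"
    "finite (S (Suc j) (map fst h))"
proof -
  show T: "S (Suc j) (map fst h) \<subseteq> {1..n}" "S (Suc j) (map fst h) \<noteq> {}"
    using assms set_pmf_coupling [OF assms(1) less_imp_le [OF assms(2)] assms(3)]
    by (auto simp: schedule_on_def)
  show "finite (S (Suc j) (map fst h))"
    using T(1) finite_subset by blast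
qed

lemma coupling_fst:
  assumes "schedule_on S n t" "j \<le> t"
  shows "map_pmf (map fst) (coupling S n k j) = adaptive S j"
  using assms(2)
proof (induction j)
  case (Suc j)
  have "map_pmf (map fst) (coupling S n k (Suc j)) = bind_pmf (coupling S n k j)
      (\<lambda>h. map_pmf (\<lambda>x. map fst h @ [x]) (map_pmf fst (coupling_step S n k (Suc j) (map fst h))))"
    by (simp add: map_pmf_def bind_assoc_pmf bind_return_pmf)
  also have "\<dots> = bind_pmf (coupling S n k j)
      (\<lambda>h. map_pmf (\<lambda>x. map fst h @ [x]) (pmf_of_set (S (Suc j) (map fst h))))"
    using coupling_next_round [OF assms(1)] Suc.prems
    by (intro bind_pmf_cong refl) (subst coupling_step_fst, auto)
  also have "\<dots> = bind_pmf (map_pmf (map fst) (coupling S n k j))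
      (\<lambda>xs. map_pmf (\<lambda>x. xs @ [x]) (pmf_of_set (S (Suc j) xs)))"
    by (simp add: bind_map_pmf)
  also have "\<dots> = adaptive S (Suc j)"
    using Suc by (simp add: map_pmf_def)
  finally show ?case .
qed simp

lemma coupling_snd:
  assumes "schedule_on S n t" "j \<le> t"
  shows "map_pmf (map snd) (coupling S n k j) =
    seq_pmf (replicate j (seq_pmf (replicate k (pmf_of_set {1..n}))))"
  using assms(2)
proof (induction j)
  case (Suc j)
  let ?R = "seq_pmf (replicate k (pmf_of_set {1..n}))"
  have "map_pmf (map snd) (coupling S n k (Suc j)) = bind_pmf (coupling S n k j)
      (\<lambda>h. map_pmf (\<lambda>z. map snd h @ [z]) (map_pmf snd (coupling_step S n k (Suc j) (map fst h))))"
    by (simp add: map_pmf_def bind_assoc_pmf bind_return_pmf)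
  also have "\<dots> = bind_pmf (coupling S n k j) (\<lambda>h. map_pmf (\<lambda>z. map snd h @ [z]) ?R)"
    using coupling_next_round [OF assms(1)] Suc.prems
    by (intro bind_pmf_cong refl) (subst coupling_step_snd, auto)
  also have "\<dots> = bind_pmf (map_pmf (map snd) (coupling S n k j)) (\<lambda>zss. map_pmf (\<lambda>z. zss @ [z]) ?R)"
    by (simp add: bind_map_pmf)
  also have "\<dots> = seq_pmf (replicate (Suc j) ?R)"
    using Suc by (simp add: seq_pmf_snoc flip: replicate_append_same)
  finally show ?case .
qed simp

lemma emeasure_coupling_miss:
  assumes "schedule_on S n t" "j \<le> t"
    and step: "\<And>j xs. j < t \<Longrightarrow> length xs = j \<Longrightarrow> set xs \<subseteq> {1..n} \<Longrightarrow>
       emeasure (measure_pmf (coupling_step S n k (Suc j) xs)) {r. fst r \<notin> set (snd r)} \<le> q"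
  shows "emeasure (measure_pmf (coupling S n k j)) {h. \<exists>r\<in>set h. fst r \<notin> set (snd r)} \<le> of_nat j * q"
  using assms(2)
proof (induction j)
  case (Suc j)
  let ?M = "{h. \<exists>r\<in>set h. fst r \<notin> set (snd r)}"
  have "emeasure (measure_pmf (coupling S n k (Suc j))) ?M = (\<integral>\<^sup>+ h.
      emeasure (measure_pmf (coupling_step S n k (Suc j) (map fst h))) ((\<lambda>r. h @ [r]) -` ?M)
      \<partial>coupling S n k j)"
    unfolding coupling_Suc_map_pmf by (simp only: emeasure_bind_pmf emeasure_map_pmf)
  also have "\<dots> \<le> (\<integral>\<^sup>+ h. indicator ?M h + q \<partial>coupling S n k j)"
  proof (intro nn_integral_mono_AE AE_pmfI)
    fix h assume h: "h \<in> set_pmf (coupling S n k j)"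
    show "emeasure (measure_pmf (coupling_step S n k (Suc j) (map fst h))) ((\<lambda>r. h @ [r]) -` ?M)
        \<le> indicator ?M h + q"
    proof (cases "h \<in> ?M")
      case True
      then show ?thesis
        using measure_pmf.emeasure_le_1 by (auto intro: order_trans add_increasing2)
    next
      case False
      then have "(\<lambda>r. h @ [r]) -` ?M = {r. fst r \<notin> set (snd r)}" by auto
      then show ?thesis
        using False step [of j "map fst h"] set_pmf_coupling [OF assms(1) _ h] Suc.prems by simp
    qed
  qed
  also have "\<dots> = emeasure (measure_pmf (coupling S n k j)) ?M + q"
    by (simp add: nn_integral_add measure_pmf.emeasure_space_1)
  also have "\<dots> \<le> of_nat (Suc j) * q"
    using Suc by (simp add: algebra_simps add_right_mono)
  finally show ?case .
qed simp

lemma coupling_entries: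
  assumes "schedule_on S n t"
  shows "map_pmf (\<lambda>h (j, i). if (j, i) \<in> {1..t} \<times> {1..k} then snd (h ! (j - 1)) ! (i - 1) else 0)
      (coupling S n k t) = Pi_pmf ({1..t} \<times> {1..k}) 0 (\<lambda>_. pmf_of_set {1..n})"
proof -
  have "map_pmf (\<lambda>h (j, i). if (j, i) \<in> {1..t} \<times> {1..k} then snd (h ! (j - 1)) ! (i - 1) else 0)
      (coupling S n k t) = map_pmf (matrix_entries 0 t k) (map_pmf (map snd) (coupling S n k t))"
    unfolding pmf.map_comp
    by (intro map_pmf_cong refl)
       (auto dest!: set_pmf_coupling [OF assms le_refl] simp: matrix_entries_def fun_eq_iff)
  then show ?thesis
    by (simp add: coupling_snd [OF assms le_refl] matrix_entries_seq_pmf)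
qed

lemma coupling_entry_uniform:
  assumes "schedule_on S n t" "j \<in> {1..t}" "i \<in> {1..k}"
  shows "map_pmf (\<lambda>h. snd (h ! (j - 1)) ! (i - 1)) (coupling S n k t) = pmf_of_set {1..n}"
proof -
  have "map_pmf (\<lambda>h. snd (h ! (j - 1)) ! (i - 1)) (coupling S n k t) =
      map_pmf (\<lambda>f. f (j, i)) (map_pmf (\<lambda>h (j, i). if (j, i) \<in> {1..t} \<times> {1..k}
        then snd (h ! (j - 1)) ! (i - 1) else 0) (coupling S n k t))"
    using assms(2,3) by (simp add: pmf.map_comp o_def)
  also have "\<dots> = pmf_of_set {1..n}"
    unfolding coupling_entries [OF assms(1)] using assms(2,3) by (simp add: Pi_pmf_component)
  finally show ?thesis .
qed

lemma coupling_entries_indep: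
  assumes "schedule_on S n t"
  shows "prob_space.indep_vars (measure_pmf (coupling S n k t)) (\<lambda>_. count_space UNIV)
    (\<lambda>(j, i) h. snd (h ! (j - 1)) ! (i - 1)) ({1..t} \<times> {1..k})"
proof -
  let ?F = "\<lambda>h (j, i). if (j, i) \<in> {1..t} \<times> {1..k} then snd (h ! (j - 1)) ! (i - 1) else 0"
  have "prob_space.indep_vars (measure_pmf (map_pmf ?F (coupling S n k t))) (\<lambda>_. count_space UNIV)
      (\<lambda>x f. f x) ({1..t} \<times> {1..k})"
    unfolding coupling_entries [OF assms] by (rule indep_vars_Pi_pmf) simp
  then have "prob_space.indep_vars (measure_pmf (coupling S n k t)) (\<lambda>_. count_space UNIV)
      (\<lambda>x h. ?F h x) ({1..t} \<times> {1..k})"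
    by (rule indep_vars_map_pmf)
  then show ?thesis
    by (rule iffD1 [OF prob_space.indep_vars_cong [OF measure_pmf.prob_space_axioms], rotated -1])
       (auto simp: fun_eq_iff)
qed

lemma prob_coupling_covers:
  fixes \<sigma> :: real
  assumes "schedule_on S n t" "n > 0" "\<sigma> \<le> 1"
    and dense: "\<And>j xs. j < t \<Longrightarrow> length xs = j \<Longrightarrow> set xs \<subseteq> {1..n} \<Longrightarrow> \<sigma> * n \<le> card (S (Suc j) xs)"
  shows "1 - t * (1 - \<sigma>) ^ k \<le>
    measure_pmf.prob (coupling S n k t) {h. set (map fst h) \<subseteq> (\<Union>r\<in>set h. set (snd r))}"
proof -
  let ?p = "coupling S n k t" and ?M = "{h. \<exists>r\<in>set h. fst r \<notin> set (snd r)}"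
  have q: "0 \<le> (1 - \<sigma>) ^ k" using assms(3) by simp
  have "emeasure (measure_pmf (coupling_step S n k (Suc j) xs)) {r. fst r \<notin> set (snd r)} \<le>
      ennreal ((1 - \<sigma>) ^ k)" if "j < t" "length xs = j" "set xs \<subseteq> {1..n}" for j xs
  proof -
    have T: "S (Suc j) xs \<subseteq> {1..n}" "\<sigma> * n \<le> card (S (Suc j) xs)"
      using assms(1) dense that by (auto simp: schedule_on_def)
    then have "card (S (Suc j) xs) \<le> n" using card_mono [of "{1..n}"] by fastforce
    then have "(1 - card (S (Suc j) xs) / n) ^ k \<le> (1 - \<sigma>) ^ k"
      using T(2) assms(2) by (intro power_mono) (simp_all add: field_simps)
    then show ?thesis
      using emeasure_coupling_step_miss [of n S "Suc j" xs k] assms(2) T(1) order_trans ennreal_leI by blast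
  qed
  then have "emeasure (measure_pmf ?p) ?M \<le> of_nat t * ennreal ((1 - \<sigma>) ^ k)"
    by (rule emeasure_coupling_miss [OF assms(1) le_refl])
  then have "measure_pmf.prob ?p ?M \<le> t * (1 - \<sigma>) ^ k"
    using q by (simp add: measure_pmf.emeasure_eq_measure ennreal_of_nat_eq_real_of_nat
        ennreal_mult' [symmetric] ennreal_le_iff)
  moreover have "- ?M \<subseteq> {h. set (map fst h) \<subseteq> (\<Union>r\<in>set h. set (snd r))}" by auto
  then have "1 - measure_pmf.prob ?p ?M \<le>
      measure_pmf.prob ?p {h. set (map fst h) \<subseteq> (\<Union>r\<in>set h. set (snd r))}"
    using measure_pmf.finite_measure_mono [of "- ?M"]
    by (simp add: measure_pmf.prob_compl [symmetric] Compl_eq_Diff_UNIV)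
  ultimately show ?thesis by linarith
qed

theorem mainTheorem3:
  fixes n t k :: nat and \<sigma> \<alpha> :: real and S :: "nat \<Rightarrow> nat list \<Rightarrow> nat set"
  assumes "n > 0" "t > 0"
    and "0 < \<sigma>" "\<sigma> \<le> 1" "\<sigma> * real n \<in> \<int>"
    and "\<alpha> > 0" "k > 0" "real k = \<alpha> / \<sigma>"
    and "\<And>j xs. j \<in> {1..t} \<Longrightarrow> length xs = j - 1 \<Longrightarrow> set xs \<subseteq> {1..n} \<Longrightarrow>
           S j xs \<subseteq> {1..n} \<and> real (card (S j xs)) = \<sigma> * real n"
  shows "map_pmf (map fst) (coupling S n k t) = adaptive S t \<and>
      (\<forall>j\<in>{1..t}. \<forall>i\<in>{1..k}.
           map_pmf (\<lambda>h. snd (h ! (j - 1)) ! (i - 1)) (coupling S n k t) = pmf_of_set {1..n}) \<and>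
      prob_space.indep_vars (measure_pmf (coupling S n k t)) (\<lambda>_. count_space UNIV)
           (\<lambda>(j, i) h. snd (h ! (j - 1)) ! (i - 1)) ({1..t} \<times> {1..k}) \<and>
      measure_pmf.prob (coupling S n k t)
           {h. set (map fst h) \<subseteq> (\<Union>r\<in>set h. set (snd r))}
         \<ge> 1 - real t * (1 - \<sigma>) powr (\<alpha> / \<sigma>)"
proof -
  have round_set: "S (Suc j) xs \<subseteq> {1..n}" "real (card (S (Suc j) xs)) = \<sigma> * n"
    if "j < t" "length xs = j" "set xs \<subseteq> {1..n}" for j xs
    using assms(9) [of "Suc j" xs] that by auto
  have schedule: "schedule_on S n t"
    unfolding schedule_on_def using round_set assms(1,3) by fastforce
  have covers: "1 - t * (1 - \<sigma>) ^ k \<le>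
      measure_pmf.prob (coupling S n k t) {h. set (map fst h) \<subseteq> (\<Union>r\<in>set h. set (snd r))}"
    using round_set by (intro prob_coupling_covers [OF schedule assms(1,4)]) simp
  have "(1 - \<sigma>) powr (\<alpha> / \<sigma>) = (1 - \<sigma>) ^ k"
    using assms(4,7) by (cases "\<sigma> = 1") (simp_all add: powr_realpow flip: assms(8))
  then show ?thesis
    using coupling_fst [OF schedule le_refl] coupling_entry_uniform [OF schedule]
      coupling_entries_indep [OF schedule] covers
    by auto
qed

end
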